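(* Let $(X,d)$ be a complete metric space with $|X|\geqslant 3$ and let $T\colon X\to X$ be continuous and asymptotically regular. Suppose there exist an upper semi-continuous function $\varphi\colon[0,\infty)\to[0,\infty)$ with $\varphi(t)<t$ for all $t>0$, and a function $F\colon[0,\infty)^3\to[0,\infty)$ with $F(0,0,0)=0$ and $F$ continuous at $(0,0,0)$, such that $$d(Tx,Ty)+d(Ty,Tz)+d(Tx,Tz)\leqslant \varphi\big(\max\{d(x,y),d(y,z),d(z,x)\}\big)+F\big(d(x,Tx),d(y,Ty),d(z,Tz)\big)$$ for all pairwise distinct $x,y,z\in X$. Then $T$ has a fixed point, and $T$ has at most two fixed points.
   Context: A mapping $T\colon X\to X$ on a metric space is asymptotically regular if $\lim_{n\to\infty}d(T^{n+1}x,T^nx)=0$ for every $x\in X$. *)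

theory Defs
  imports "HOL-Analysis.Analysis"
begin

definition asymptotically_regular :: "('a::metric_space \<Rightarrow> 'a) \<Rightarrow> bool" where
  "asymptotically_regular T \<longleftrightarrow>
     (\<forall>x. (\<lambda>n. dist ((T ^^ Suc n) x) ((T ^^ n) x)) \<longlonglongrightarrow> 0)"

definition usc_nonneg :: "(real \<Rightarrow> real) \<Rightarrow> bool" where
  "usc_nonneg \<phi> \<longleftrightarrow>
     (\<forall>t\<ge>0. \<forall>e>0. \<exists>\<delta>>0. \<forall>s\<ge>0. \<bar>s - t\<bar> < \<delta> \<longrightarrow> \<phi> s < \<phi> t + e)"

definition cont_at_origin3 :: "(real \<Rightarrow> real \<Rightarrow> real \<Rightarrow> real) \<Rightarrow> bool" where
  "cont_at_origin3 F \<longleftrightarrow>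
     ((\<lambda>(a,b,c). F a b c) \<longlongrightarrow> F 0 0 0) (at (0,0,0) within {0..} \<times> {0..} \<times> {0..})"

end

theory Submission
  imports Defs
begin

text \<open>Three distinct fixed points would span a triangle whose perimeter is at most
  \<open>\<phi>\<close> of its longest side, which is less than that side; so there are at most two.
  For existence, suppose \<open>T\<close> has no fixed point, so consecutive points of an orbit
  \<open>x\<^sub>n\<close> are distinct. Upper semi-continuity of \<open>\<phi>\<close> together with \<open>\<phi> t < t\<close> yields a
  uniform gap \<open>\<phi> s \<le> \<epsilon> - \<eta>\<close> for \<open>0 < s < \<epsilon> + \<delta>\<close>. Once the steps of the orbit and
  hence the \<open>F\<close>-term are small, applying the inequality to the triangle
  \<open>x\<^sub>n, x\<^sub>m, x\<^sub>n\<^sub>+\<^sub>1\<close> shows that \<open>x\<^sub>m\<close> within \<open>\<epsilon>\<close> of \<open>x\<^sub>n\<close> forces \<open>x\<^sub>m\<^sub>+\<^sub>1\<close> within \<open>\<epsilon>\<close> of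
  \<open>x\<^sub>n\<close>. So the orbit is Cauchy, and by continuity its limit is a fixed point.\<close>

definition contracts_perimeters ::
    "('a::metric_space \<Rightarrow> 'a) \<Rightarrow> (real \<Rightarrow> real) \<Rightarrow> (real \<Rightarrow> real \<Rightarrow> real \<Rightarrow> real) \<Rightarrow> bool" where
  "contracts_perimeters T \<phi> F \<longleftrightarrow>
     (\<forall>x y z. distinct [x, y, z] \<longrightarrow>
        dist (T x) (T y) + dist (T y) (T z) + dist (T x) (T z)
          \<le> \<phi> (Max {dist x y, dist y z, dist z x})
            + F (dist x (T x)) (dist y (T y)) (dist z (T z)))"

lemma finite_card_le_2_if_no_three_distinct:
  assumes "\<And>a b c. a \<in> S \<Longrightarrow> b \<in> S \<Longrightarrow> c \<in> S \<Longrightarrow> \<not> distinct [a, b, c]"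
  shows "finite S \<and> card S \<le> 2"
proof (rule ccontr)
  assume "\<not> (finite S \<and> card S \<le> 2)"
  then obtain B where "finite B" "card B = 3" "B \<subseteq> S"
    by (metis infinite_arbitrarily_large not_le_imp_less obtain_subset_with_card_n
        Suc_leI numeral_2_eq_2 numeral_3_eq_3)
  then obtain a b c where "B = {a, b, c}" "distinct [a, b, c]"
    unfolding card_3_iff by auto
  then show False
    using assms \<open>B \<subseteq> S\<close> by blast
qed

lemma contracts_perimeters_fixed_points_card_le_2:
  assumes contr: "contracts_perimeters T \<phi> F"
    and phi_less: "\<forall>t>0. \<phi> t < t"
    and F_zero: "F 0 0 0 = 0"
  shows "finite {x. T x = x} \<and> card {x. T x = x} \<le> 2"
proof (rule finite_card_le_2_if_no_three_distinct)
  fix a b c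
  assume "a \<in> {x. T x = x}" "b \<in> {x. T x = x}" "c \<in> {x. T x = x}"
  then have fixed: "T a = a" "T b = b" "T c = c" by auto
  show "\<not> distinct [a, b, c]"
  proof
    assume abc: "distinct [a, b, c]"
    define M where "M = Max {dist a b, dist b c, dist c a}"
    have perimeter: "dist a b + dist b c + dist a c \<le> \<phi> M"
      using contr abc fixed F_zero unfolding contracts_perimeters_def M_def by force
    have "0 < M"
      using abc by (simp add: M_def less_max_iff_disj)
    then have "\<phi> M < M"
      using phi_less by blast
    moreover have "M \<le> dist a b + dist b c + dist a c"
      by (simp add: M_def dist_commute[of c a])
    ultimately show False
      using perimeter by linarith
  qed
qed

lemma cont_at_origin3_small_near_origin:
  assumes "cont_at_origin3 F" "F 0 0 0 = 0" "0 < \<gamma>"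
  obtains \<rho> where "0 < \<rho>"
    "\<And>a b c. 0 \<le> a \<Longrightarrow> a < \<rho> \<Longrightarrow> 0 \<le> b \<Longrightarrow> b < \<rho> \<Longrightarrow> 0 \<le> c \<Longrightarrow> c < \<rho> \<Longrightarrow> F a b c < \<gamma>"
proof -
  have "\<forall>\<^sub>F p in at (0, 0, 0) within {0..} \<times> {0..} \<times> {0..}. dist ((\<lambda>(a, b, c). F a b c) p) 0 < \<gamma>"
    using assms tendstoD unfolding cont_at_origin3_def by fastforce
  then obtain d where "0 < d" and d: "\<And>p. p \<in> {0..} \<times> {0..} \<times> {0..} \<Longrightarrow> p \<noteq> (0, 0, 0) \<Longrightarrow>
      dist p (0, 0, 0) < d \<Longrightarrow> dist ((\<lambda>(a, b, c). F a b c) p) 0 < \<gamma>"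
    unfolding eventually_at by blast
  show thesis
  proof
    show "0 < d / 3"
      using \<open>0 < d\<close> by simp
    fix a b c :: real
    assume "0 \<le> a" "a < d / 3" "0 \<le> b" "b < d / 3" "0 \<le> c" "c < d / 3"
    moreover have "dist (a, b, c) (0, 0, 0) \<le> \<bar>a\<bar> + (\<bar>b\<bar> + \<bar>c\<bar>)"
      using norm_Pair_le[of a "(b, c)"] norm_Pair_le[of b c] by (simp add: dist_norm)
    ultimately show "F a b c < \<gamma>"
      using d[of "(a, b, c)"] assms(2,3) by (cases "(a, b, c) = (0, 0, 0)") auto
  qed
qed

lemma usc_nonneg_below_diagonal_gap:
  assumes usc: "usc_nonneg \<phi>"
    and phi_less: "\<forall>t>0. \<phi> t < t"
    and "0 < \<epsilon>"
  obtains \<delta> \<eta> where "0 < \<delta>" "0 < \<eta>" "\<And>s. 0 < s \<Longrightarrow> s < \<epsilon> + \<delta> \<Longrightarrow> \<phi> s \<le> \<epsilon> - \<eta>"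
proof -
  define \<eta>\<^sub>0 where "\<eta>\<^sub>0 = (\<epsilon> - \<phi> \<epsilon>) / 2"
  have "0 < \<eta>\<^sub>0"
    using phi_less \<open>0 < \<epsilon>\<close> by (simp add: \<eta>\<^sub>0_def)
  then obtain \<delta> where "0 < \<delta>" and near: "\<And>s. 0 \<le> s \<Longrightarrow> \<bar>s - \<epsilon>\<bar> < \<delta> \<Longrightarrow> \<phi> s < \<phi> \<epsilon> + \<eta>\<^sub>0"
    using usc \<open>0 < \<epsilon>\<close> unfolding usc_nonneg_def by (meson less_imp_le)
  show thesis
  proof
    show "0 < \<delta>" "0 < min \<eta>\<^sub>0 \<delta>"
      using \<open>0 < \<delta>\<close> \<open>0 < \<eta>\<^sub>0\<close> by auto
    fix s
    assume "0 < s" "s < \<epsilon> + \<delta>"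
    show "\<phi> s \<le> \<epsilon> - min \<eta>\<^sub>0 \<delta>"
    proof (cases "\<bar>s - \<epsilon>\<bar> < \<delta>")
      case True
      have "\<phi> \<epsilon> + \<eta>\<^sub>0 = \<epsilon> - \<eta>\<^sub>0"
        by (simp add: \<eta>\<^sub>0_def field_simps)
      then show ?thesis
        using near[of s] True \<open>0 < s\<close> min.cobounded1[of \<eta>\<^sub>0 \<delta>] by simp
    next
      case False
      then show ?thesis
        using phi_less \<open>0 < s\<close> \<open>s < \<epsilon> + \<delta>\<close> by force
    qed
  qed
qed

lemma contracts_perimeters_step_stays_close:
  assumes contr: "contracts_perimeters T \<phi> F"
    and gap: "\<And>s. 0 < s \<Longrightarrow> s < \<epsilon> + r \<Longrightarrow> \<phi> s \<le> \<epsilon> - \<eta>"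
    and F_small: "\<And>a b c. 0 \<le> a \<Longrightarrow> a < r \<Longrightarrow> 0 \<le> b \<Longrightarrow> b < r \<Longrightarrow> 0 \<le> c \<Longrightarrow> c < r \<Longrightarrow>
        F a b c \<le> \<eta> - r"
    and "2 * r \<le> \<epsilon>"
    and "T x \<noteq> x" "dist x (T x) < r" "dist (T x) (T (T x)) < r" "dist y (T y) < r"
    and "dist x y \<le> \<epsilon>"
  shows "dist x (T y) \<le> \<epsilon>"
proof -
  consider "y = x" | "y = T x" | "distinct [x, y, T x]"
    using \<open>T x \<noteq> x\<close> by fastforce
  then show ?thesis
  proof cases
    case 1
    then show ?thesis
      using assms by simp
  next
    case 2
    then show ?thesis
      using assms dist_triangle[of x "T (T x)" "T x"] by simp
  next
    case 3
    have "0 < r"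
      using \<open>dist x (T x) < r\<close> zero_le_dist[of x "T x"] by linarith
    define M where "M = Max {dist x y, dist y (T x), dist (T x) x}"
    have perimeter: "dist (T x) (T y) + dist (T y) (T (T x)) + dist (T x) (T (T x))
        \<le> \<phi> M + F (dist x (T x)) (dist y (T y)) (dist (T x) (T (T x)))"
      using contr 3 unfolding contracts_perimeters_def M_def by blast
    have "0 < M"
      using \<open>T x \<noteq> x\<close> by (simp add: M_def less_max_iff_disj)
    moreover have "M < \<epsilon> + r"
      using assms \<open>0 < r\<close> dist_triangle[of y "T x" x] by (simp add: M_def dist_commute)
    ultimately have "\<phi> M \<le> \<epsilon> - \<eta>"
      by (rule gap)
    moreover have "F (dist x (T x)) (dist y (T y)) (dist (T x) (T (T x))) \<le> \<eta> - r"
      using assms by (intro F_small) auto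
    ultimately have "dist (T x) (T y) \<le> \<epsilon> - r"
      using perimeter zero_le_dist[of "T y" "T (T x)"] zero_le_dist[of "T x" "T (T x)"] by linarith
    then show ?thesis
      using dist_triangle[of x "T y" "T x"] \<open>dist x (T x) < r\<close> by linarith
  qed
qed

lemma contracts_perimeters_orbit_stays_close:
  assumes contr: "contracts_perimeters T \<phi> F"
    and no_fixed_point: "\<forall>x. T x \<noteq> x"
    and gap: "\<And>s. 0 < s \<Longrightarrow> s < \<epsilon> + r \<Longrightarrow> \<phi> s \<le> \<epsilon> - \<eta>"
    and F_small: "\<And>a b c. 0 \<le> a \<Longrightarrow> a < r \<Longrightarrow> 0 \<le> b \<Longrightarrow> b < r \<Longrightarrow> 0 \<le> c \<Longrightarrow> c < r \<Longrightarrow>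
        F a b c \<le> \<eta> - r"
    and "2 * r \<le> \<epsilon>"
    and small_steps: "\<And>k. N \<le> k \<Longrightarrow> dist ((T ^^ k) x) ((T ^^ Suc k) x) < r"
    and "N \<le> n"
  shows "dist ((T ^^ n) x) ((T ^^ (n + j)) x) \<le> \<epsilon>"
proof (induction j)
  case 0
  have "0 < r"
    using small_steps[OF \<open>N \<le> n\<close>] by (meson le_less_trans zero_le_dist)
  then show ?case
    using \<open>2 * r \<le> \<epsilon>\<close> by simp
next
  case (Suc j)
  have "dist ((T ^^ n) x) (T ((T ^^ (n + j)) x)) \<le> \<epsilon>"
    by (rule contracts_perimeters_step_stays_close[OF contr gap F_small \<open>2 * r \<le> \<epsilon>\<close>])
      (use Suc.IH no_fixed_point small_steps[of n] small_steps[of "Suc n"] small_steps[of "n + j"]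
        \<open>N \<le> n\<close> in auto)
  then show ?case
    by simp
qed

lemma contracts_perimeters_orbit_Cauchy:
  assumes contr: "contracts_perimeters T \<phi> F"
    and no_fixed_point: "\<forall>x. T x \<noteq> x"
    and asreg: "asymptotically_regular T"
    and phi_usc: "usc_nonneg \<phi>"
    and phi_less: "\<forall>t>0. \<phi> t < t"
    and F_zero: "F 0 0 0 = 0"
    and F_cont: "cont_at_origin3 F"
  shows "Cauchy (\<lambda>n. (T ^^ n) x)"
  unfolding Cauchy_altdef
proof (intro allI impI)
  fix e :: real
  assume "0 < e"
  define \<epsilon> where "\<epsilon> = e / 2"
  have "0 < \<epsilon>"
    using \<open>0 < e\<close> by (simp add: \<epsilon>_def)
  then obtain \<delta> \<eta> where "0 < \<delta>" "0 < \<eta>" and gap: "\<And>s. 0 < s \<Longrightarrow> s < \<epsilon> + \<delta> \<Longrightarrow> \<phi> s \<le> \<epsilon> - \<eta>"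
    using usc_nonneg_below_diagonal_gap[OF phi_usc phi_less] by blast
  obtain \<rho> where "0 < \<rho>" and F_small: "\<And>a b c. 0 \<le> a \<Longrightarrow> a < \<rho> \<Longrightarrow> 0 \<le> b \<Longrightarrow> b < \<rho> \<Longrightarrow>
      0 \<le> c \<Longrightarrow> c < \<rho> \<Longrightarrow> F a b c < \<eta> / 2"
    using cont_at_origin3_small_near_origin[OF F_cont F_zero, of "\<eta> / 2"] \<open>0 < \<eta>\<close> by auto
  define r where "r = min (min \<delta> \<rho>) (min (\<eta> / 2) (\<epsilon> / 2))"
  have "0 < r"
    using \<open>0 < \<delta>\<close> \<open>0 < \<rho>\<close> \<open>0 < \<eta>\<close> \<open>0 < \<epsilon>\<close> by (simp add: r_def)
  have gap_r: "\<phi> s \<le> \<epsilon> - \<eta>" if "0 < s" "s < \<epsilon> + r" for s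
    using gap that by (simp add: r_def)
  have F_small_r: "F a b c \<le> \<eta> - r" if "0 \<le> a" "a < r" "0 \<le> b" "b < r" "0 \<le> c" "c < r" for a b c
    using F_small[of a b c] that by (simp add: r_def)
  have "(\<lambda>n. dist ((T ^^ Suc n) x) ((T ^^ n) x)) \<longlonglongrightarrow> 0"
    using asreg unfolding asymptotically_regular_def by simp
  then have "\<forall>\<^sub>F n in sequentially. dist ((T ^^ Suc n) x) ((T ^^ n) x) < r"
    using \<open>0 < r\<close> by (rule order_tendstoD(2))
  then obtain N where small_steps: "\<And>n. N \<le> n \<Longrightarrow> dist ((T ^^ n) x) ((T ^^ Suc n) x) < r"
    by (auto simp: eventually_sequentially dist_commute)
  show "\<exists>M. \<forall>m\<ge>M. \<forall>n>m. dist ((T ^^ m) x) ((T ^^ n) x) < e"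
  proof (intro exI allI impI)
    fix m n
    assume "N \<le> m" "m < n"
    have "2 * r \<le> \<epsilon>"
      by (simp add: r_def)
    then have "dist ((T ^^ m) x) ((T ^^ (m + (n - m))) x) \<le> \<epsilon>"
      using contracts_perimeters_orbit_stays_close[where N = N,
          OF contr no_fixed_point gap_r F_small_r _ small_steps \<open>N \<le> m\<close>]
      by blast
    then show "dist ((T ^^ m) x) ((T ^^ n) x) < e"
      using \<open>0 < e\<close> \<open>m < n\<close> by (simp add: \<epsilon>_def)
  qed
qed

lemma orbit_limit_fixed_point:
  fixes T :: "'a::metric_space \<Rightarrow> 'a"
  assumes "continuous_on UNIV T" "(\<lambda>n. (T ^^ n) x) \<longlonglongrightarrow> p"
  shows "T p = p"
proof (rule LIMSEQ_unique)
  show "(\<lambda>n. T ((T ^^ n) x)) \<longlonglongrightarrow> T p"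
    using assms continuous_on_tendsto_compose[of UNIV T] by auto
  show "(\<lambda>n. T ((T ^^ n) x)) \<longlonglongrightarrow> p"
    using LIMSEQ_Suc[OF assms(2)] by simp
qed

lemma contracts_perimeters_fixed_point_exists:
  fixes T :: "'a::complete_space \<Rightarrow> 'a"
  assumes "contracts_perimeters T \<phi> F" "continuous_on UNIV T" "asymptotically_regular T"
    "usc_nonneg \<phi>" "\<forall>t>0. \<phi> t < t" "F 0 0 0 = 0" "cont_at_origin3 F"
  shows "\<exists>x. T x = x"
proof (rule ccontr)
  fix x :: 'a
  assume "\<not> (\<exists>x. T x = x)"
  then have "Cauchy (\<lambda>n. (T ^^ n) x)"
    using contracts_perimeters_orbit_Cauchy assms by blast
  then obtain p where "(\<lambda>n. (T ^^ n) x) \<longlonglongrightarrow> p"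
    using Cauchy_convergent convergent_def by blast
  then have "T p = p"
    using orbit_limit_fixed_point \<open>continuous_on UNIV T\<close> by blast
  then show False
    using \<open>\<not> (\<exists>x. T x = x)\<close> by blast
qed

theorem theorem4p11:
  fixes T :: "'a::complete_space \<Rightarrow> 'a"
    and \<phi> :: "real \<Rightarrow> real"
    and F :: "real \<Rightarrow> real \<Rightarrow> real \<Rightarrow> real"
  assumes three: "\<exists>a b c :: 'a. distinct [a, b, c]"
    and contT: "continuous_on UNIV T"
    and asreg: "asymptotically_regular T"
    and phi_nonneg: "\<forall>t\<ge>0. \<phi> t \<ge> 0"
    and phi_usc: "usc_nonneg \<phi>"
    and phi_less: "\<forall>t>0. \<phi> t < t"
    and F_nonneg: "\<forall>a\<ge>0. \<forall>b\<ge>0. \<forall>c\<ge>0. F a b c \<ge> 0"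
    and F_zero: "F 0 0 0 = 0"
    and F_cont: "cont_at_origin3 F"
    and contr: "\<forall>x y z. distinct [x, y, z] \<longrightarrow>
        dist (T x) (T y) + dist (T y) (T z) + dist (T x) (T z)
          \<le> \<phi> (Max {dist x y, dist y z, dist z x})
            + F (dist x (T x)) (dist y (T y)) (dist z (T z))"
  shows "(\<exists>x. T x = x) \<and> finite {x. T x = x} \<and> card {x. T x = x} \<le> 2"
proof -
  have perimeters: "contracts_perimeters T \<phi> F"
    using contr unfolding contracts_perimeters_def .
  show ?thesis
    using contracts_perimeters_fixed_point_exists[OF perimeters contT asreg phi_usc phi_less F_zero F_cont]
      contracts_perimeters_fixed_points_card_le_2[OF perimeters phi_less F_zero]
    by blast
qed

end
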